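(* Let $\mathbb{T}^2=[-\pi,\pi]^2$, let $k_0$ be a positive integer, $U(y)=\sin(k_0y)$, let $f_0,g_0$ be smooth $2\pi$-periodic functions, and let $\rho$ solve \[ \partial_t\rho+U(y)\partial_x\rho=0,\qquad \rho(0,x,y)=f_0(y)\sin x+g_0(y)\cos x . \] Then $\|\rho(t,\cdot)\|_{H^1}^2\le 2\|\rho(0,\cdot)\|_{H^1}^2+10\pi k_0^2t^2\|\rho(0,\cdot)\|_{L^2}^2$.
   Context: $\|F\|_{H^1}^2=\int_{\mathbb{T}^2}\big(F^2+|\nabla F|^2\big)\,dx\,dy$. *)

theory Defs
  imports "HOL-Analysis.Analysis"
begin

definition torus :: "(real \<times> real) set" where
  "torus = cbox (-pi, -pi) (pi, pi)"

definition smooth_fun :: "(real \<Rightarrow> real) \<Rightarrow> bool" where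
  "smooth_fun f \<longleftrightarrow> (\<forall>n. \<forall>y. ((deriv ^^ n) f) differentiable (at y))"

definition periodic_2pi :: "(real \<Rightarrow> real) \<Rightarrow> bool" where
  "periodic_2pi f \<longleftrightarrow> (\<forall>y. f (y + 2 * pi) = f y)"

definition L2_sq :: "(real \<Rightarrow> real \<Rightarrow> real) \<Rightarrow> real" where
  "L2_sq F = integral torus (\<lambda>(x, y). (F x y)\<^sup>2)"

definition H1_sq :: "(real \<Rightarrow> real \<Rightarrow> real) \<Rightarrow> real" where
  "H1_sq F = integral torus (\<lambda>(x, y). (F x y)\<^sup>2
      + (deriv (\<lambda>x'. F x' y) x)\<^sup>2 + (deriv (\<lambda>y'. F x y') y)\<^sup>2)"

end

theory Submission
  imports Defs
begin

(* Along the characteristics x = x0 + s sin(k0 y) the solution is constant, so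
   rho(t, x, y) = rho(0, x - t sin(k0 y), y): at every time rho is a single Fourier mode in x
   whose phase is sheared in y. Integrating in x first, each squared mode p sin + q cos over a
   full period contributes pi (p^2 + q^2). Shearing adds t k0 cos(k0 y) times the rotated
   coefficients to the y-derivative, and (u + v)^2 <= 2 u^2 + 2 v^2 bounds its contribution by
   twice the initial H1 energy plus 2 k0^2 t^2 times the initial L2 energy. *)

lemma transport_constant_along_characteristics:
  fixes r rt rx :: "real \<Rightarrow> real \<Rightarrow> real" and u t x :: real
  assumes r_t: "\<And>s x. s \<ge> 0 \<Longrightarrow> ((\<lambda>s'. r s' x) has_real_derivative rt s x) (at s within {0..})"
    and r_x: "\<And>s x. s \<ge> 0 \<Longrightarrow> ((\<lambda>x'. r s x') has_real_derivative rx s x) (at x)"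
    and rx_cont: "continuous_on ({0..} \<times> UNIV) (\<lambda>(s, x). rx s x)"
    and transport: "\<And>s x. s \<ge> 0 \<Longrightarrow> rt s x + u * rx s x = 0"
    and "t \<ge> 0"
  shows "r t x = r 0 (x - t * u)"
proof -
  have r_diff: "((\<lambda>(s, z). r s z) has_derivative (\<lambda>(ds, dz). rt s z * ds + blinfun_mult_right (rx s z) dz))
      (at (s, z) within {0..} \<times> UNIV)" if "s \<ge> 0" for s z
  proof (rule has_derivative_partialsI)
    show "((\<lambda>s. r s z) has_derivative (*) (rt s z)) (at s within {0..})"
      using r_t[OF that] by (simp add: has_field_derivative_def)
    show "((\<lambda>z. r s z) has_derivative blinfun_mult_right (rx s z)) (at z within UNIV)"
      if "s \<in> {0..}" for s z
      using r_x that by (auto simp: has_field_derivative_def)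
    have "continuous_on ({0..} \<times> UNIV) (\<lambda>(s, z). blinfun_mult_right (rx s z))"
      using rx_cont unfolding case_prod_unfold
      by (intro continuous_on_compose2[OF linear_continuous_on[OF bounded_linear_blinfun_mult_right]]) auto
    then show "continuous (at (s, z) within {0..} \<times> UNIV) (\<lambda>(s, z). blinfun_mult_right (rx s z))"
      using that by (simp add: continuous_on_eq_continuous_within)
  qed auto
  define x0 where "x0 = x - t * u"
  define h where "h = (\<lambda>s. r s (x0 + s * u))"
  have "(h has_derivative (\<lambda>_. 0)) (at s within {0..})" if "s \<ge> 0" for s
  proof -
    have "((\<lambda>s. (s, x0 + s * u)) has_derivative (\<lambda>ds. (ds, ds * u))) (at s within {0..})"
      by (auto intro!: derivative_eq_intros)
    moreover have "(\<lambda>s. (s, x0 + s * u)) ` {0..} \<subseteq> {0..} \<times> UNIV"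
      by auto
    ultimately have "((\<lambda>(s, z). r s z) \<circ> (\<lambda>s. (s, x0 + s * u)) has_derivative
        (\<lambda>(ds, dz). rt s (x0 + s * u) * ds + blinfun_mult_right (rx s (x0 + s * u)) dz)
        \<circ> (\<lambda>ds. (ds, ds * u))) (at s within {0..})"
      by (intro diff_chain_within has_derivative_subset[OF r_diff[OF that]])
    then have "(h has_derivative (\<lambda>ds. ds * (rt s (x0 + s * u) + u * rx s (x0 + s * u))))
        (at s within {0..})"
      by (simp add: h_def o_def algebra_simps)
    then show ?thesis
      using transport[OF that] by simp
  qed
  then obtain c where "\<forall>s\<in>{0..}. h s = c"
    using has_derivative_zero_constant[of "{0..}" h] by auto
  then have "h t = h 0"
    using \<open>t \<ge> 0\<close> by auto
  then show ?thesis
    by (simp add: h_def x0_def)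
qed

lemma shear_transport_solution:
  fixes \<rho> \<rho>t \<rho>x :: "real \<Rightarrow> real \<Rightarrow> real \<Rightarrow> real" and U :: "real \<Rightarrow> real"
  assumes dt: "\<And>s x y. s \<ge> 0 \<Longrightarrow> ((\<lambda>s'. \<rho> s' x y) has_real_derivative \<rho>t s x y) (at s within {0..})"
    and dx: "\<And>s x y. s \<ge> 0 \<Longrightarrow> ((\<lambda>x'. \<rho> s x' y) has_real_derivative \<rho>x s x y) (at x)"
    and \<rho>x_cont: "continuous_on ({0..} \<times> UNIV) (\<lambda>(s, x, y). \<rho>x s x y)"
    and transport: "\<And>s x y. s \<ge> 0 \<Longrightarrow> \<rho>t s x y + U y * \<rho>x s x y = 0"
    and "t \<ge> 0"
  shows "\<rho> t x y = \<rho> 0 (x - t * U y) y"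
proof -
  have "continuous_on ({0..} \<times> UNIV) (\<lambda>p. (\<lambda>(s, x, y). \<rho>x s x y) (fst p, snd p, y))"
    by (rule continuous_on_compose2[OF \<rho>x_cont]) (auto intro!: continuous_intros)
  then have "continuous_on ({0..} \<times> UNIV) (\<lambda>(s, x). \<rho>x s x y)"
    by (simp add: case_prod_unfold)
  moreover have "\<rho>t s x y + U y * \<rho>x s x y = 0" if "s \<ge> 0" for s x
    using transport[OF that] .
  ultimately show ?thesis
    using transport_constant_along_characteristics[where r = "\<lambda>s x. \<rho> s x y"
        and rt = "\<lambda>s x. \<rho>t s x y" and rx = "\<lambda>s x. \<rho>x s x y" and u = "U y"] dt dx \<open>t \<ge> 0\<close>
    by blast
qed

lemma smooth_fun_has_continuous_deriv:
  assumes "smooth_fun f"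
  shows "(f has_real_derivative deriv f y) (at y)" and "continuous_on UNIV (deriv f)"
proof -
  have "(deriv ^^ 0) f differentiable (at y)" "\<And>y. (deriv ^^ 1) f differentiable (at y)"
    using assms unfolding smooth_fun_def by blast+
  then show "(f has_real_derivative deriv f y) (at y)" "continuous_on UNIV (deriv f)"
    by (auto simp: DERIV_deriv_iff_real_differentiable
        intro!: continuous_at_imp_continuous_on differentiable_imp_continuous_within)
qed

lemma has_integral_sin_cos_combination_square:
  fixes p q c :: real
  shows "((\<lambda>x. (p * sin (x - c) + q * cos (x - c))\<^sup>2) has_integral pi * (p\<^sup>2 + q\<^sup>2)) {-pi..pi}"
proof -
  define F where "F x = (p\<^sup>2 + q\<^sup>2) * x / 2 + (q\<^sup>2 - p\<^sup>2) / 2 * (sin (x - c) * cos (x - c))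
      - p * q / 2 * ((cos (x - c))\<^sup>2 - (sin (x - c))\<^sup>2)" for x
  have square_expansion: "(p * S + q * C)\<^sup>2 = (p\<^sup>2 + q\<^sup>2) / 2 * (S\<^sup>2 + C\<^sup>2)
      + (q\<^sup>2 - p\<^sup>2) / 2 * (C\<^sup>2 - S\<^sup>2) + 2 * p * q * (S * C)" for S C :: real
    by (simp add: power2_eq_square field_simps)
  have "(F has_real_derivative (p * sin (x - c) + q * cos (x - c))\<^sup>2) (at x within {-pi..pi})" for x
  proof -
    have "(F has_real_derivative (p\<^sup>2 + q\<^sup>2) / 2 + (q\<^sup>2 - p\<^sup>2) / 2 * ((cos (x - c))\<^sup>2 - (sin (x - c))\<^sup>2)
        + 2 * p * q * (sin (x - c) * cos (x - c))) (at x within {-pi..pi})"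
      unfolding F_def
      by (rule derivative_eq_intros refl | simp)+ (simp add: power2_eq_square algebra_simps)
    then show ?thesis
      using square_expansion[of "sin (x - c)" "cos (x - c)"] by simp
  qed
  moreover have "F pi - F (-pi) = pi * (p\<^sup>2 + q\<^sup>2)"
    by (simp add: F_def sin_diff cos_diff field_simps)
  ultimately show ?thesis
    using fundamental_theorem_of_calculus[of "-pi" pi F]
    by (simp add: has_real_derivative_iff_has_vector_derivative)
qed

lemma integral_cbox_Pair_fiberwise:
  fixes G :: "real \<Rightarrow> real \<Rightarrow> real"
  assumes cont: "continuous_on (cbox (a, c) (b, d)) (\<lambda>(x, y). G x y)"
    and fiber: "\<And>y. y \<in> {c..d} \<Longrightarrow> ((\<lambda>x. G x y) has_integral h y) {a..b}"
  shows "integral (cbox (a, c) (b, d)) (\<lambda>(x, y). G x y) = integral {c..d} h"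
proof -
  have "integral (cbox (a, c) (b, d)) (\<lambda>(x, y). G x y)
      = integral (cbox a b) (\<lambda>x. integral (cbox c d) (\<lambda>y. G x y))"
    using integral_prod_continuous[OF cont] by simp
  also have "\<dots> = integral (cbox c d) (\<lambda>y. integral (cbox a b) (\<lambda>x. G x y))"
    using cont by (rule integral_swap_continuous)
  also have "\<dots> = integral {c..d} h"
    by (auto simp: cbox_interval integral_unique[OF fiber] intro!: integral_cong)
  finally show ?thesis .
qed

lemma L2_sq_nonneg: "0 \<le> L2_sq F"
  unfolding L2_sq_def
  by (cases "(\<lambda>(x, y). (F x y)\<^sup>2) integrable_on torus")
    (auto intro: integral_nonneg simp: not_integrable_integral)

definition sheared_wave :: "(real \<Rightarrow> real) \<Rightarrow> (real \<Rightarrow> real) \<Rightarrow> (real \<Rightarrow> real) \<Rightarrow> real \<Rightarrow> real \<Rightarrow> real"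
  where "sheared_wave f g a x y = f y * sin (x - a y) + g y * cos (x - a y)"

lemma L2_sq_sheared_wave:
  assumes "continuous_on UNIV f" "continuous_on UNIV g" "continuous_on UNIV a"
  shows "L2_sq (sheared_wave f g a) = integral {-pi..pi} (\<lambda>y. pi * ((f y)\<^sup>2 + (g y)\<^sup>2))"
  unfolding L2_sq_def torus_def sheared_wave_def
proof (rule integral_cbox_Pair_fiberwise)
  show "continuous_on (cbox (-pi, -pi) (pi, pi))
      (\<lambda>(x, y). (f y * sin (x - a y) + g y * cos (x - a y))\<^sup>2)"
    unfolding case_prod_unfold
    by (intro continuous_intros continuous_on_compose2[OF assms(1)]
        continuous_on_compose2[OF assms(2)] continuous_on_compose2[OF assms(3)]) auto
qed (rule has_integral_sin_cos_combination_square)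

lemma H1_sq_sheared_wave:
  assumes f: "\<And>y. (f has_real_derivative f' y) (at y)"
    and g: "\<And>y. (g has_real_derivative g' y) (at y)"
    and a: "\<And>y. (a has_real_derivative a' y) (at y)"
    and f'_cont: "continuous_on UNIV f'" and g'_cont: "continuous_on UNIV g'"
    and a'_cont: "continuous_on UNIV a'"
  shows "H1_sq (sheared_wave f g a) = integral {-pi..pi}
    (\<lambda>y. pi * (2 * ((f y)\<^sup>2 + (g y)\<^sup>2) + (f' y + a' y * g y)\<^sup>2 + (g' y - a' y * f y)\<^sup>2))"
proof -
  have deriv_x: "deriv (\<lambda>x'. sheared_wave f g a x' y) x
      = (- g y) * sin (x - a y) + f y * cos (x - a y)" for x y
    unfolding sheared_wave_def
    by (rule DERIV_imp_deriv) (rule derivative_eq_intros refl | simp)+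
  have deriv_y: "deriv (\<lambda>y'. sheared_wave f g a x y') y
      = (f' y + a' y * g y) * sin (x - a y) + (g' y - a' y * f y) * cos (x - a y)" for x y
    unfolding sheared_wave_def
    by (rule DERIV_imp_deriv) (rule derivative_eq_intros refl f g a | simp add: algebra_simps)+
  have f_cont: "continuous_on UNIV f" and g_cont: "continuous_on UNIV g"
    and a_cont: "continuous_on UNIV a"
    using f g a by (auto intro!: continuous_at_imp_continuous_on DERIV_isCont)
  show ?thesis
    unfolding H1_sq_def torus_def deriv_x deriv_y
  proof (rule integral_cbox_Pair_fiberwise)
    show "continuous_on (cbox (-pi, -pi) (pi, pi)) (\<lambda>(x, y).
        (sheared_wave f g a x y)\<^sup>2 + (- g y * sin (x - a y) + f y * cos (x - a y))\<^sup>2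
        + ((f' y + a' y * g y) * sin (x - a y) + (g' y - a' y * f y) * cos (x - a y))\<^sup>2)"
      unfolding case_prod_unfold sheared_wave_def
      by (intro continuous_intros continuous_on_compose2[OF f_cont] continuous_on_compose2[OF g_cont]
          continuous_on_compose2[OF a_cont] continuous_on_compose2[OF f'_cont]
          continuous_on_compose2[OF g'_cont] continuous_on_compose2[OF a'_cont]) auto
    fix y
    have "((\<lambda>x. (sheared_wave f g a x y)\<^sup>2 + (- g y * sin (x - a y) + f y * cos (x - a y))\<^sup>2
        + ((f' y + a' y * g y) * sin (x - a y) + (g' y - a' y * f y) * cos (x - a y))\<^sup>2)
        has_integral pi * ((f y)\<^sup>2 + (g y)\<^sup>2) + pi * ((- g y)\<^sup>2 + (f y)\<^sup>2)
          + pi * ((f' y + a' y * g y)\<^sup>2 + (g' y - a' y * f y)\<^sup>2)) {-pi..pi}"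
      unfolding sheared_wave_def by (intro has_integral_add has_integral_sin_cos_combination_square)
    then show "((\<lambda>x. (sheared_wave f g a x y)\<^sup>2 + (- g y * sin (x - a y) + f y * cos (x - a y))\<^sup>2
        + ((f' y + a' y * g y) * sin (x - a y) + (g' y - a' y * f y) * cos (x - a y))\<^sup>2)
        has_integral pi * (2 * ((f y)\<^sup>2 + (g y)\<^sup>2)
          + (f' y + a' y * g y)\<^sup>2 + (g' y - a' y * f y)\<^sup>2)) {-pi..pi}"
      by (simp add: algebra_simps)
  qed
qed

lemma sheared_gradient_square_le:
  fixes a b a' b' A :: real
  shows "(a' + A * b)\<^sup>2 + (b' - A * a)\<^sup>2 \<le> 2 * (a'\<^sup>2 + b'\<^sup>2) + 2 * A\<^sup>2 * (a\<^sup>2 + b\<^sup>2)"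
proof -
  have "0 \<le> (a' - A * b)\<^sup>2 + (b' + A * a)\<^sup>2"
    by simp
  then show ?thesis
    by (simp add: power2_eq_square algebra_simps)
qed

lemma H1_sq_sheared_wave_le:
  assumes f: "\<And>y. (f has_real_derivative f' y) (at y)"
    and g: "\<And>y. (g has_real_derivative g' y) (at y)"
    and a: "\<And>y. (a has_real_derivative a' y) (at y)"
    and f'_cont: "continuous_on UNIV f'" and g'_cont: "continuous_on UNIV g'"
    and a'_cont: "continuous_on UNIV a'"
    and shear_bound: "\<And>y. (a' y)\<^sup>2 \<le> B"
  shows "H1_sq (sheared_wave f g a)
    \<le> 2 * H1_sq (sheared_wave f g (\<lambda>_. 0)) + 2 * B * L2_sq (sheared_wave f g (\<lambda>_. 0))"
proof -
  define E where "E = (\<lambda>y. pi * ((f y)\<^sup>2 + (g y)\<^sup>2))"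
  define D where "D = (\<lambda>y. pi * ((f' y)\<^sup>2 + (g' y)\<^sup>2))"
  define S where "S = (\<lambda>y. pi * ((f' y + a' y * g y)\<^sup>2 + (g' y - a' y * f y)\<^sup>2))"
  have f_cont: "continuous_on UNIV f" and g_cont: "continuous_on UNIV g"
    using f g by (auto intro!: continuous_at_imp_continuous_on DERIV_isCont)
  have integrable: "h integrable_on {-pi..pi}" if "continuous_on UNIV h" for h :: "real \<Rightarrow> real"
    using that by (auto intro: integrable_continuous_interval continuous_on_subset)
  have E_int: "E integrable_on {-pi..pi}" and D_int: "D integrable_on {-pi..pi}"
    and S_int: "S integrable_on {-pi..pi}"
    unfolding E_def D_def S_def
    by (intro integrable continuous_intros continuous_on_compose2[OF f_cont]
        continuous_on_compose2[OF g_cont] continuous_on_compose2[OF f'_cont]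
        continuous_on_compose2[OF g'_cont] continuous_on_compose2[OF a'_cont]; simp)+
  have "H1_sq (sheared_wave f g a) = integral {-pi..pi} (\<lambda>y. 2 * E y + S y)"
    unfolding H1_sq_sheared_wave[OF f g a f'_cont g'_cont a'_cont] E_def S_def
    by (simp add: algebra_simps)
  also have "\<dots> \<le> integral {-pi..pi} (\<lambda>y. 2 * (2 * E y + D y) + 2 * B * E y)"
  proof (rule integral_le)
    fix y
    have "S y \<le> pi * (2 * ((f' y)\<^sup>2 + (g' y)\<^sup>2) + 2 * (a' y)\<^sup>2 * ((f y)\<^sup>2 + (g y)\<^sup>2))"
      unfolding S_def by (intro mult_left_mono sheared_gradient_square_le) simp
    also have "\<dots> \<le> pi * (2 * ((f' y)\<^sup>2 + (g' y)\<^sup>2) + 2 * B * ((f y)\<^sup>2 + (g y)\<^sup>2))"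
      using shear_bound[of y] by (intro mult_left_mono add_left_mono mult_right_mono) auto
    finally have "S y \<le> 2 * D y + 2 * B * E y"
      by (simp add: D_def E_def algebra_simps)
    moreover have "0 \<le> E y"
      by (simp add: E_def)
    ultimately show "2 * E y + S y \<le> 2 * (2 * E y + D y) + 2 * B * E y"
      by simp
  qed (intro integrable_add integrable_on_mult_right E_int D_int S_int)+
  also have "\<dots> = 2 * integral {-pi..pi} (\<lambda>y. 2 * E y + D y) + 2 * B * integral {-pi..pi} E"
    using E_int D_int by (simp add: integral_add integrable_add integrable_on_mult_right)
  also have "\<dots> = 2 * H1_sq (sheared_wave f g (\<lambda>_. 0)) + 2 * B * L2_sq (sheared_wave f g (\<lambda>_. 0))"
    using H1_sq_sheared_wave[OF f g _ f'_cont g'_cont, of "\<lambda>_. 0" "\<lambda>_. 0"]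
      L2_sq_sheared_wave[OF f_cont g_cont, of "\<lambda>_. 0"]
    by (simp add: E_def D_def algebra_simps)
  finally show ?thesis .
qed

theorem lemma3p4:
  fixes k0 :: nat and f0 g0 :: "real \<Rightarrow> real"
    and \<rho> \<rho>t \<rho>x \<rho>y :: "real \<Rightarrow> real \<Rightarrow> real \<Rightarrow> real"
    and t :: real
  assumes k0: "k0 > 0"
    and f0: "smooth_fun f0" "periodic_2pi f0"
    and g0: "smooth_fun g0" "periodic_2pi g0"
    and dt: "\<And>s x y. s \<ge> 0 \<Longrightarrow> ((\<lambda>s'. \<rho> s' x y) has_real_derivative \<rho>t s x y) (at s within {0..})"
    and dx: "\<And>s x y. s \<ge> 0 \<Longrightarrow> ((\<lambda>x'. \<rho> s x' y) has_real_derivative \<rho>x s x y) (at x)"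
    and dy: "\<And>s x y. s \<ge> 0 \<Longrightarrow> ((\<lambda>y'. \<rho> s x y') has_real_derivative \<rho>y s x y) (at y)"
    and cont: "continuous_on ({0..} \<times> UNIV) (\<lambda>(s, x, y). \<rho> s x y)"
      "continuous_on ({0..} \<times> UNIV) (\<lambda>(s, x, y). \<rho>t s x y)"
      "continuous_on ({0..} \<times> UNIV) (\<lambda>(s, x, y). \<rho>x s x y)"
      "continuous_on ({0..} \<times> UNIV) (\<lambda>(s, x, y). \<rho>y s x y)"
    and pde: "\<And>s x y. s \<ge> 0 \<Longrightarrow> \<rho>t s x y + sin (real k0 * y) * \<rho>x s x y = 0"
    and init: "\<And>x y. \<rho> 0 x y = f0 y * sin x + g0 y * cos x"
    and t: "t \<ge> 0"
  shows "H1_sq (\<rho> t) \<le> 2 * H1_sq (\<rho> 0) + 10 * pi * (real k0)\<^sup>2 * t\<^sup>2 * L2_sq (\<rho> 0)"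
proof -
  note f0' = smooth_fun_has_continuous_deriv[OF f0(1)]
  note g0' = smooth_fun_has_continuous_deriv[OF g0(1)]
  have rho_0: "\<rho> 0 = sheared_wave f0 g0 (\<lambda>_. 0)"
    by (intro ext) (simp add: init sheared_wave_def)
  have rho_t: "\<rho> t = sheared_wave f0 g0 (\<lambda>y. t * sin (real k0 * y))"
    by (intro ext) (simp add: shear_transport_solution[OF dt dx cont(3) pde t] init sheared_wave_def)
  have phase_deriv:
    "((\<lambda>y. t * sin (real k0 * y)) has_real_derivative t * (real k0 * cos (real k0 * y))) (at y)" for y
    by (auto intro!: derivative_eq_intros)
  have shear_bound: "(t * (real k0 * cos (real k0 * y)))\<^sup>2 \<le> (real k0 * t)\<^sup>2" for y
  proof -
    have "(t * (real k0 * cos (real k0 * y)))\<^sup>2 = (real k0 * t)\<^sup>2 * (cos (real k0 * y))\<^sup>2"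
      by (simp add: power_mult_distrib)
    also have "\<dots> \<le> (real k0 * t)\<^sup>2"
      by (intro mult_left_le) (simp_all add: abs_square_le_1)
    finally show ?thesis .
  qed
  have "H1_sq (\<rho> t) \<le> 2 * H1_sq (\<rho> 0) + 2 * (real k0 * t)\<^sup>2 * L2_sq (\<rho> 0)"
    unfolding rho_0 rho_t
    by (rule H1_sq_sheared_wave_le[OF f0'(1) g0'(1) phase_deriv f0'(2) g0'(2) _ shear_bound])
      (intro continuous_intros)
  also have "\<dots> \<le> 2 * H1_sq (\<rho> 0) + 10 * pi * (real k0)\<^sup>2 * t\<^sup>2 * L2_sq (\<rho> 0)"
  proof -
    have "2 * (real k0 * t)\<^sup>2 \<le> 10 * pi * (real k0 * t)\<^sup>2"
      using pi_gt3 by (intro mult_right_mono) auto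
    then show ?thesis
      by (intro add_left_mono mult_right_mono L2_sq_nonneg) (simp add: power_mult_distrib)
  qed
  finally show ?thesis .
qed

end
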